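(* Let $\Gamma=\{\mathrm{id},\gamma\}$ and $\tau(\gamma)$ be the half-turn $(x,y,z)\mapsto(x,-y,-z)$. Let $G$ be a $\Gamma$-symmetric graph (write $u'=\phi(\gamma)u$) with an edge $vv'$ where $v\ne v'$. Let $G_1$ be the graph with $V(G_1)=V(G)\cup\{w,w'\}$ ($w,w'$ new, swapped by the action) and $E(G_1)=E(G)\setminus\{vv'\}\cup\{wv,wv',w'v,w'v',ww'\}$. If $G$ is $\tau(\Gamma)$-rigid on $\mathcal{Y}$, then $G_1$ is $\tau(\Gamma)$-rigid on $\mathcal{Y}$.
   Context: $\mathcal{Y}=\{(x,y,z):x^2+y^2=1\}$. A framework on $\mathcal{Y}$ is $(G,p)$, $G$ finite simple, $p:V\to\mathcal{Y}$, $p(u)\neq p(v)$ for edges $uv$. Its rigidity matrix $R_{\mathcal{Y}}(G,p)$ is the $(|E|+|V|)\times 3|V|$ matrix with a row for each edge $v_iv_j$ having $p(v_i)-p(v_j)$ in the columns of $v_i$ and $p(v_j)-p(v_i)$ in those of $v_j$, and a row for each vertex $v_i$ with $p(v_i)=(x_i,y_i,z_i)$ having $(x_i,y_i,0)$ in the columns of $v_i$ (zeros elsewhere). The framework is infinitesimally rigid if every kernel vector $u$ has the form $u_i=(0,0,a)+b(-y_i,x_i,0)$. A graph is $\Gamma$-symmetric if equipped with a homomorphism $\phi:\Gamma\to\operatorname{Aut}(G)$. A framework is $\Gamma$-symmetric w.r.t. $\phi,\tau$ if $\tau(\gamma)p(v)=p(\phi(\gamma)v)$. $G$ is $\tau(\Gamma)$-rigid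 if some $\Gamma$-symmetric framework $(G,p)$ on $\mathcal{Y}$ is infinitesimally rigid. *)

theory Defs
  imports "HOL-Analysis.Analysis"
begin

text \<open>Points of R^3 are modelled as real^3, with coordinates x = v$1, y = v$2, z = v$3.
  A finite simple graph is a finite vertex set V with an edge set E of 2-element subsets of V.\<close>

definition on_cylinder :: "real^3 \<Rightarrow> bool" where
  "on_cylinder q \<longleftrightarrow> (q$1)^2 + (q$2)^2 = 1"

definition simple_graph :: "'a set \<Rightarrow> 'a set set \<Rightarrow> bool" where
  "simple_graph V E \<longleftrightarrow> finite V \<and> E \<subseteq> {{u, v} | u v. u \<in> V \<and> v \<in> V \<and> u \<noteq> v}"

definition cyl_framework :: "'a set \<Rightarrow> 'a set set \<Rightarrow> ('a \<Rightarrow> real^3) \<Rightarrow> bool" where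
  "cyl_framework V E p \<longleftrightarrow> simple_graph V E \<and> (\<forall>v\<in>V. on_cylinder (p v))
     \<and> (\<forall>u\<in>V. \<forall>v\<in>V. {u, v} \<in> E \<longrightarrow> p u \<noteq> p v)"

text \<open>u is in the kernel of the rigidity matrix R_Y(G,p): the edge row of v_i v_j applied to u is
  (p_i - p_j).u_i + (p_j - p_i).u_j, the vertex row of v_i applied to u is (x_i,y_i,0).u_i.\<close>
definition cyl_inf_motion :: "'a set \<Rightarrow> 'a set set \<Rightarrow> ('a \<Rightarrow> real^3) \<Rightarrow> ('a \<Rightarrow> real^3) \<Rightarrow> bool" where
  "cyl_inf_motion V E p u \<longleftrightarrow>
     (\<forall>i\<in>V. \<forall>j\<in>V. {i, j} \<in> E \<longrightarrow> (p i - p j) \<bullet> u i + (p j - p i) \<bullet> u j = 0)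
   \<and> (\<forall>i\<in>V. vector [p i $ 1, p i $ 2, 0] \<bullet> u i = 0)"

definition cyl_inf_rigid :: "'a set \<Rightarrow> 'a set set \<Rightarrow> ('a \<Rightarrow> real^3) \<Rightarrow> bool" where
  "cyl_inf_rigid V E p \<longleftrightarrow>
     (\<forall>u. cyl_inf_motion V E p u \<longrightarrow>
        (\<exists>a b. \<forall>i\<in>V. u i = vector [0, 0, a] + b *\<^sub>R vector [- (p i $ 2), p i $ 1, 0]))"

text \<open>Gamma = {id, gamma} (cyclic of order 2). A homomorphism phi : Gamma -> Aut(G) is given by
  the image s = phi(gamma), an automorphism of G with s o s = id on V.\<close>
definition C2_symmetric_graph :: "'a set \<Rightarrow> 'a set set \<Rightarrow> ('a \<Rightarrow> 'a) \<Rightarrow> bool" where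
  "C2_symmetric_graph V E s \<longleftrightarrow> simple_graph V E \<and> bij_betw s V V
     \<and> (\<forall>u\<in>V. \<forall>v\<in>V. {u, v} \<in> E \<longleftrightarrow> {s u, s v} \<in> E)
     \<and> (\<forall>v\<in>V. s (s v) = v)"

definition half_turn :: "real^3 \<Rightarrow> real^3" where
  "half_turn q = vector [q $ 1, - (q $ 2), - (q $ 3)]"

text \<open>G is tau(Gamma)-rigid: some Gamma-symmetric framework (G,p) on Y is infinitesimally rigid
  (symmetry for the identity element is trivial).\<close>
definition half_turn_rigid :: "'a set \<Rightarrow> 'a set set \<Rightarrow> ('a \<Rightarrow> 'a) \<Rightarrow> bool" where
  "half_turn_rigid V E s \<longleftrightarrow>
     (\<exists>p. cyl_framework V E p \<and> (\<forall>v\<in>V. half_turn (p v) = p (s v)) \<and> cyl_inf_rigid V E p)"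

end

theory Submission
  imports Defs
begin

text \<open>Let a = p v, so p (s v) is the half-turn image of a. Put w at a well-chosen point q of the
  cylinder and w' at the half-turn image of q. The choice of q makes two things true. First,
  the four points a, half_turn a, q, half_turn q carry a half-turn-invariant self-stress of K4 (with
  the cylinder normals) that is nonzero on the edge v (s v); hence every infinitesimal motion of
  the new framework satisfies the constraint of the deleted edge, and so restricts to a motion of
  the old framework, which is trivial on V. Second, the cylinder normal at q and the directions
  from q to a and to half_turn a span the whole space, so once the trivial motion is subtracted,
  the motion, which now vanishes on V, also vanishes at w and, by symmetry, at w'.\<close>

lemma orthogonal_to_rows_eq_0:
  fixes A :: "real^'n^'n"
  assumes "det A \<noteq> 0" and "\<And>i. A $ i \<bullet> x = 0"
  shows "x = 0"
proof -
  have "A *v x = A *v 0"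
    using assms(2) by (simp add: vec_eq_iff matrix_vector_mul_component)
  then show ?thesis
    using assms(1) invertible_det_nz inj_matrix_vector_mult by (metis injD)
qed

text \<open>Pairing the equilibrium condition at each vertex with the velocity of that vertex and
  summing writes the stressed rows of the rigidity matrix as a linear dependency.\<close>

lemma K4_stress_edge_row:
  fixes p1 p2 p3 p4 u1 u2 u3 u4 n1 n2 n3 n4 :: "'a::real_inner"
  assumes
    "\<omega>12 *\<^sub>R (p1 - p2) + \<omega>13 *\<^sub>R (p1 - p3) + \<omega>14 *\<^sub>R (p1 - p4) + \<mu>1 *\<^sub>R n1 = 0"
    "\<omega>12 *\<^sub>R (p2 - p1) + \<omega>23 *\<^sub>R (p2 - p3) + \<omega>24 *\<^sub>R (p2 - p4) + \<mu>2 *\<^sub>R n2 = 0"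
    "\<omega>13 *\<^sub>R (p3 - p1) + \<omega>23 *\<^sub>R (p3 - p2) + \<omega>34 *\<^sub>R (p3 - p4) + \<mu>3 *\<^sub>R n3 = 0"
    "\<omega>14 *\<^sub>R (p4 - p1) + \<omega>24 *\<^sub>R (p4 - p2) + \<omega>34 *\<^sub>R (p4 - p3) + \<mu>4 *\<^sub>R n4 = 0"
  and "(p1 - p3) \<bullet> u1 + (p3 - p1) \<bullet> u3 = 0" "(p1 - p4) \<bullet> u1 + (p4 - p1) \<bullet> u4 = 0"
      "(p2 - p3) \<bullet> u2 + (p3 - p2) \<bullet> u3 = 0" "(p2 - p4) \<bullet> u2 + (p4 - p2) \<bullet> u4 = 0"
      "(p3 - p4) \<bullet> u3 + (p4 - p3) \<bullet> u4 = 0"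
  and "n1 \<bullet> u1 = 0" "n2 \<bullet> u2 = 0" "n3 \<bullet> u3 = 0" "n4 \<bullet> u4 = 0"
  and "\<omega>12 \<noteq> 0"
  shows "(p1 - p2) \<bullet> u1 + (p2 - p1) \<bullet> u2 = 0"
proof -
  let ?b = "\<lambda>x y ux uy. (x - y) \<bullet> ux + (y - x) \<bullet> uy"
  have "(\<omega>12 *\<^sub>R (p1 - p2) + \<omega>13 *\<^sub>R (p1 - p3) + \<omega>14 *\<^sub>R (p1 - p4) + \<mu>1 *\<^sub>R n1) \<bullet> u1
      + (\<omega>12 *\<^sub>R (p2 - p1) + \<omega>23 *\<^sub>R (p2 - p3) + \<omega>24 *\<^sub>R (p2 - p4) + \<mu>2 *\<^sub>R n2) \<bullet> u2
      + (\<omega>13 *\<^sub>R (p3 - p1) + \<omega>23 *\<^sub>R (p3 - p2) + \<omega>34 *\<^sub>R (p3 - p4) + \<mu>3 *\<^sub>R n3) \<bullet> u3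
      + (\<omega>14 *\<^sub>R (p4 - p1) + \<omega>24 *\<^sub>R (p4 - p2) + \<omega>34 *\<^sub>R (p4 - p3) + \<mu>4 *\<^sub>R n4) \<bullet> u4
    = \<omega>12 * ?b p1 p2 u1 u2 + \<omega>13 * ?b p1 p3 u1 u3 + \<omega>14 * ?b p1 p4 u1 u4
      + \<omega>23 * ?b p2 p3 u2 u3 + \<omega>24 * ?b p2 p4 u2 u4 + \<omega>34 * ?b p3 p4 u3 u4
      + \<mu>1 * (n1 \<bullet> u1) + \<mu>2 * (n2 \<bullet> u2) + \<mu>3 * (n3 \<bullet> u3) + \<mu>4 * (n4 \<bullet> u4)"
    by (simp add: algebra_simps)
  then have "\<omega>12 * ?b p1 p2 u1 u2 = 0"
    using assms(1-13) by simp
  then show ?thesis using assms(14) by simp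
qed

abbreviation cyl_normal :: "real^3 \<Rightarrow> real^3" where
  "cyl_normal q \<equiv> vector [q $ 1, q $ 2, 0]"

lemma half_turn_component [simp]:
  "half_turn q $ 1 = q $ 1" "half_turn q $ 2 = - q $ 2" "half_turn q $ 3 = - q $ 3"
  by (simp_all add: half_turn_def)

lemma half_turn_half_turn [simp]: "half_turn (half_turn q) = q"
  by (simp add: vec_eq_iff forall_3)

lemma on_cylinder_half_turn [simp]: "on_cylinder (half_turn q) \<longleftrightarrow> on_cylinder q"
  by (simp add: on_cylinder_def)

abbreviation trivial_motion :: "real \<Rightarrow> real \<Rightarrow> real^3 \<Rightarrow> real^3" where
  "trivial_motion \<alpha> \<beta> x \<equiv> vector [0, 0, \<alpha>] + \<beta> *\<^sub>R vector [- (x $ 2), x $ 1, 0]"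

lemma trivial_motion_edge_row:
  "(x - y) \<bullet> trivial_motion \<alpha> \<beta> x + (y - x) \<bullet> trivial_motion \<alpha> \<beta> y = 0"
  by (simp add: inner_vec_def sum_3 algebra_simps)

lemma trivial_motion_normal: "cyl_normal x \<bullet> trivial_motion \<alpha> \<beta> x = 0"
  by (simp add: inner_vec_def sum_3)

lemma cyl_inf_motionD:
  assumes "cyl_inf_motion V E p u"
  shows cyl_inf_motion_edge: "\<lbrakk>i \<in> V; j \<in> V; {i, j} \<in> E\<rbrakk>
      \<Longrightarrow> (p i - p j) \<bullet> u i + (p j - p i) \<bullet> u j = 0"
    and cyl_inf_motion_normal: "i \<in> V \<Longrightarrow> cyl_normal (p i) \<bullet> u i = 0"
  using assms unfolding cyl_inf_motion_def by blast+

lemma cyl_inf_motion_diff_trivial: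
  assumes "cyl_inf_motion V E p u"
  shows "cyl_inf_motion V E p (\<lambda>i. u i - trivial_motion \<alpha> \<beta> (p i))"
  unfolding cyl_inf_motion_def
proof (intro conjI ballI impI)
  fix i j assume "i \<in> V" "j \<in> V" "{i, j} \<in> E"
  then have "(p i - p j) \<bullet> u i + (p j - p i) \<bullet> u j = 0"
    by (rule cyl_inf_motion_edge[OF assms])
  then show "(p i - p j) \<bullet> (u i - trivial_motion \<alpha> \<beta> (p i))
      + (p j - p i) \<bullet> (u j - trivial_motion \<alpha> \<beta> (p j)) = 0"
    using trivial_motion_edge_row[of "p i" "p j" \<alpha> \<beta>] by (simp add: inner_diff_right)
next
  fix i assume "i \<in> V"
  then have "cyl_normal (p i) \<bullet> u i = 0"
    by (rule cyl_inf_motion_normal[OF assms])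
  then show "cyl_normal (p i) \<bullet> (u i - trivial_motion \<alpha> \<beta> (p i)) = 0"
    using trivial_motion_normal[of "p i" \<alpha> \<beta>] by (simp add: inner_diff_right)
qed

lemma simple_graph_edge:
  assumes "simple_graph V E" and "{i, j} \<in> E"
  shows "i \<in> V" "j \<in> V"
  using assms unfolding simple_graph_def by (auto simp: doubleton_eq_iff)

text \<open>The determinant says that w is pinned by the
  cylinder and its edges to v and s v. The two vector equations are the equilibrium conditions at
  a and at q of a half-turn-invariant self-stress on the K4 with vertices a, half_turn a, q and
  half_turn q, whose coefficient \<omega>0 on the edge between a and half_turn a is nonzero.\<close>

definition admissible_position :: "real^3 \<Rightarrow> real^3 \<Rightarrow> bool" where
  "admissible_position a q \<longleftrightarrow> on_cylinder q
     \<and> det (vector [cyl_normal q, q - a, q - half_turn a]) \<noteq> 0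
     \<and> (\<exists>\<omega>0 \<omega>1 \<omega>2 \<omega>3 \<mu>a \<mu>q. \<omega>0 \<noteq> 0
          \<and> \<omega>0 *\<^sub>R (a - half_turn a) + \<omega>1 *\<^sub>R (a - q) + \<omega>2 *\<^sub>R (a - half_turn q)
              + \<mu>a *\<^sub>R cyl_normal a = 0
          \<and> \<omega>1 *\<^sub>R (q - a) + \<omega>2 *\<^sub>R (q - half_turn a) + \<omega>3 *\<^sub>R (q - half_turn q)
              + \<mu>q *\<^sub>R cyl_normal q = 0)"

lemma admissible_positionI:
  assumes "on_cylinder q" "det (vector [cyl_normal q, q - a, q - half_turn a]) \<noteq> 0" "\<omega>0 \<noteq> 0"
    "\<omega>0 *\<^sub>R (a - half_turn a) + \<omega>1 *\<^sub>R (a - q) + \<omega>2 *\<^sub>R (a - half_turn q)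
      + \<mu>a *\<^sub>R cyl_normal a = 0"
    "\<omega>1 *\<^sub>R (q - a) + \<omega>2 *\<^sub>R (q - half_turn a) + \<omega>3 *\<^sub>R (q - half_turn q)
      + \<mu>q *\<^sub>R cyl_normal q = 0"
  shows "admissible_position a q"
  using assms unfolding admissible_position_def by blast

lemma admissible_position_exists:
  assumes "on_cylinder a" and "a \<noteq> half_turn a"
  shows "\<exists>q. admissible_position a q"
proof -
  define x y z where "x = a $ 1" and "y = a $ 2" and "z = a $ 3"
  have a: "a = vector [x, y, z]"
    by (simp add: x_def y_def z_def vec_eq_iff forall_3)
  have cyl: "x\<^sup>2 + y\<^sup>2 = 1"
    using assms(1) by (simp add: on_cylinder_def x_def y_def)
  note simps = a on_cylinder_def det_3 vec_eq_iff forall_3 power2_eq_square algebra_simps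
  have "y \<noteq> 0 \<or> z \<noteq> 0"
    using assms(2) by (auto simp: a vec_eq_iff forall_3)
  \<comment> \<open>Each witness comes with a stress solving the equilibrium equations; in the first case
    a, q, half_turn a, half_turn q form a parallelogram.\<close>
  then consider "x \<noteq> 0" "y \<noteq> 0" | "y = 0" "z \<noteq> 0" | "x = 0" "z \<noteq> 0" | "x = 0" "z = 0"
    by blast
  then show ?thesis
  proof cases
    case 1
    have "admissible_position a (vector [x, y, z + 1])"
      by (rule admissible_positionI[of _ _ 1 "-1" "-1" 0 1 0]) (use 1 cyl in \<open>simp_all add: simps\<close>)
    then show ?thesis ..
  next
    case 2
    then have "x\<^sup>2 = 1" "x \<noteq> 0"
      using cyl by auto
    have "admissible_position a (vector [3/5 * x, 4/5, 0])"
      by (rule admissible_positionI[of _ _ 15 "-15" "-15" 12 25 "-20"])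
        (use 2 \<open>x\<^sup>2 = 1\<close> \<open>x \<noteq> 0\<close> in \<open>simp_all add: simps\<close>)
    then show ?thesis ..
  next
    case 3
    then have "y\<^sup>2 = 1" "y \<noteq> 0"
      using cyl by auto
    have "admissible_position a (vector [3/5, 4/5 * y, 4/5 * z])"
      by (rule admissible_positionI[of _ _ 16 20 "-20" 0 25 0])
        (use 3 \<open>y\<^sup>2 = 1\<close> \<open>y \<noteq> 0\<close> in \<open>simp_all add: simps\<close>)
    then show ?thesis ..
  next
    case 4
    then have "y \<noteq> 0"
      using cyl by auto
    have "admissible_position a (vector [3/5, 4/5, 1])"
      by (rule admissible_positionI[of _ _ 1 0 0 "-2" 0 0])
        (use 4 \<open>y \<noteq> 0\<close> in \<open>simp_all add: simps\<close>)
    then show ?thesis ..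
  qed
qed

lemma admissible_position_distinct:
  assumes "admissible_position a q"
  shows "q \<noteq> a" "q \<noteq> half_turn a" "q \<noteq> half_turn q"
proof -
  have det: "det (vector [cyl_normal q, q - a, q - half_turn a]) \<noteq> 0"
    using assms unfolding admissible_position_def by blast
  then show "q \<noteq> a" "q \<noteq> half_turn a"
    by (auto simp: det_3 simp del: half_turn_component)
  show "q \<noteq> half_turn q"
  proof
    assume "q = half_turn q"
    then have "q $ 2 = - q $ 2" "q $ 3 = - q $ 3"
      by (metis half_turn_component(2), metis half_turn_component(3))
    then have "q $ 2 = 0" "q $ 3 = 0"
      by simp_all
    then show False
      using det by (simp add: det_3)
  qed
qed

lemma admissible_position_pins:
  assumes "admissible_position a q"
    and "cyl_normal q \<bullet> c = 0" "(q - a) \<bullet> c = 0" "(q - half_turn a) \<bullet> c = 0"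
  shows "c = 0"
proof (rule orthogonal_to_rows_eq_0)
  show "det (vector [cyl_normal q, q - a, q - half_turn a]) \<noteq> 0"
    using assms(1) unfolding admissible_position_def by blast
  show "vector [cyl_normal q, q - a, q - half_turn a] $ i \<bullet> c = 0" for i :: 3
    using assms(2-4) exhaust_3[of i] by auto
qed

lemma admissible_position_pins_half_turn:
  assumes "admissible_position a q"
    and "cyl_normal (half_turn q) \<bullet> c = 0" "(half_turn q - a) \<bullet> c = 0"
      "(half_turn q - half_turn a) \<bullet> c = 0"
  shows "c = 0"
proof -
  have "half_turn c = 0"
    by (rule admissible_position_pins[OF assms(1)])
      (use assms(2-4) in \<open>simp_all add: inner_vec_def sum_3 algebra_simps\<close>)
  then show ?thesis
    by (simp add: vec_eq_iff forall_3)
qed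

lemma admissible_position_edge_row:
  assumes "admissible_position a q"
    and "cyl_normal a \<bullet> ua = 0" "cyl_normal (half_turn a) \<bullet> ub = 0"
      "cyl_normal q \<bullet> uq = 0" "cyl_normal (half_turn q) \<bullet> ur = 0"
    and "(a - q) \<bullet> ua + (q - a) \<bullet> uq = 0"
      "(a - half_turn q) \<bullet> ua + (half_turn q - a) \<bullet> ur = 0"
      "(half_turn a - q) \<bullet> ub + (q - half_turn a) \<bullet> uq = 0"
      "(half_turn a - half_turn q) \<bullet> ub + (half_turn q - half_turn a) \<bullet> ur = 0"
      "(q - half_turn q) \<bullet> uq + (half_turn q - q) \<bullet> ur = 0"
  shows "(a - half_turn a) \<bullet> ua + (half_turn a - a) \<bullet> ub = 0"
proof -
  obtain \<omega>0 \<omega>1 \<omega>2 \<omega>3 \<mu>a \<mu>q where "\<omega>0 \<noteq> 0"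
    and eq_a: "\<omega>0 *\<^sub>R (a - half_turn a) + \<omega>1 *\<^sub>R (a - q) + \<omega>2 *\<^sub>R (a - half_turn q)
      + \<mu>a *\<^sub>R cyl_normal a = 0"
    and eq_q: "\<omega>1 *\<^sub>R (q - a) + \<omega>2 *\<^sub>R (q - half_turn a) + \<omega>3 *\<^sub>R (q - half_turn q)
      + \<mu>q *\<^sub>R cyl_normal q = 0"
    using assms(1) unfolding admissible_position_def by blast
  have eq_ha: "\<omega>0 *\<^sub>R (half_turn a - a) + \<omega>2 *\<^sub>R (half_turn a - q)
      + \<omega>1 *\<^sub>R (half_turn a - half_turn q) + \<mu>a *\<^sub>R cyl_normal (half_turn a) = 0"
    using eq_a by (simp add: vec_eq_iff forall_3 algebra_simps)
  have eq_hq: "\<omega>2 *\<^sub>R (half_turn q - a) + \<omega>1 *\<^sub>R (half_turn q - half_turn a)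
      + \<omega>3 *\<^sub>R (half_turn q - q) + \<mu>q *\<^sub>R cyl_normal (half_turn q) = 0"
    using eq_q by (simp add: vec_eq_iff forall_3 algebra_simps)
  show ?thesis
    by (rule K4_stress_edge_row[OF eq_a eq_ha eq_q eq_hq assms(6-10,2-5) \<open>\<omega>0 \<noteq> 0\<close>])
qed

locale half_turn_K4_extension =
  fixes V :: "'a set" and E :: "'a set set" and s :: "'a \<Rightarrow> 'a" and v w w' :: 'a
    and p :: "'a \<Rightarrow> real^3"
  assumes symmetric_graph: "C2_symmetric_graph V E s"
    and v_in: "v \<in> V" and v_edge: "{v, s v} \<in> E"
    and fresh: "w \<notin> V" "w' \<notin> V" "w \<noteq> w'"
    and framework: "cyl_framework V E p"
    and p_symmetric: "\<forall>u\<in>V. half_turn (p u) = p (s u)"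
    and rigid: "cyl_inf_rigid V E p"
begin

abbreviation "V_ext \<equiv> V \<union> {w, w'}"
abbreviation "E_ext \<equiv> (E - {{v, s v}}) \<union> {{w, v}, {w, s v}, {w', v}, {w', s v}, {w, w'}}"

lemma graph: "simple_graph V E"
  using symmetric_graph unfolding C2_symmetric_graph_def by blast

lemma s_in: "u \<in> V \<Longrightarrow> s u \<in> V"
  using symmetric_graph unfolding C2_symmetric_graph_def bij_betw_def by blast

lemma sv_in: "s v \<in> V"
  using s_in v_in .

lemma p_sv: "p (s v) = half_turn (p v)"
  using p_symmetric v_in by simp

definition q :: "real^3" where
  "q = (SOME q. admissible_position (p v) q)"

lemma q_admissible: "admissible_position (p v) q"
proof -
  have "on_cylinder (p v)"
    using framework v_in unfolding cyl_framework_def by blast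
  moreover have "p v \<noteq> half_turn (p v)"
    using framework v_in sv_in v_edge p_sv unfolding cyl_framework_def by metis
  ultimately show ?thesis
    unfolding q_def by (rule someI_ex[OF admissible_position_exists])
qed

definition p_ext :: "'a \<Rightarrow> real^3" where
  "p_ext = p(w := q, w' := half_turn q)"

lemma p_ext_simps [simp]:
  "i \<in> V \<Longrightarrow> p_ext i = p i" "p_ext w = q" "p_ext w' = half_turn q"
  using fresh by (auto simp: p_ext_def)

lemma extended_framework: "cyl_framework V_ext E_ext p_ext"
  unfolding cyl_framework_def
proof (intro conjI ballI impI)
  have "finite V" and "E \<subseteq> {{x, y} | x y. x \<in> V \<and> y \<in> V \<and> x \<noteq> y}"
    using graph unfolding simple_graph_def by blast+
  then show "simple_graph V_ext E_ext"
    using v_in sv_in fresh unfolding simple_graph_def by blast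
next
  show "on_cylinder (p_ext i)" if "i \<in> V_ext" for i
    using that framework q_admissible unfolding cyl_framework_def admissible_position_def by auto
next
  fix i j assume "i \<in> V_ext" "j \<in> V_ext" "{i, j} \<in> E_ext"
  then consider "{i, j} \<in> E" | "{i, j} \<in> {{w, v}, {w, s v}, {w', v}, {w', s v}, {w, w'}}"
    by (meson DiffD1 UnE)
  then show "p_ext i \<noteq> p_ext j"
  proof cases
    case 1
    then show ?thesis
      using framework graph simple_graph_edge unfolding cyl_framework_def by fastforce
  next
    case 2
    have "q \<noteq> p v" "q \<noteq> half_turn (p v)" "half_turn q \<noteq> p v" "half_turn q \<noteq> half_turn (p v)"
      "q \<noteq> half_turn q"
      using admissible_position_distinct[OF q_admissible] by (metis half_turn_half_turn)+
    with 2 show ?thesis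
      using v_in sv_in p_sv fresh by (auto simp: doubleton_eq_iff)
  qed
qed

lemma extended_symmetric: "\<forall>u\<in>V_ext. half_turn (p_ext u) = p_ext ((s(w := w', w' := w)) u)"
proof
  fix u assume "u \<in> V_ext"
  then consider "u \<in> V" | "u = w" | "u = w'"
    by blast
  then show "half_turn (p_ext u) = p_ext ((s(w := w', w' := w)) u)"
  proof cases
    case 1
    then show ?thesis
      using s_in[OF 1] p_symmetric fresh by auto
  qed (use fresh in simp_all)
qed

lemma extended_motion_restrict:
  assumes "cyl_inf_motion V_ext E_ext p_ext u"
  shows "cyl_inf_motion V E p u"
proof -
  note edge = cyl_inf_motion_edge[OF assms] and normal = cyl_inf_motion_normal[OF assms]
  have removed: "(p v - p (s v)) \<bullet> u v + (p (s v) - p v) \<bullet> u (s v) = 0"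
    unfolding p_sv
  proof (rule admissible_position_edge_row[OF q_admissible])
    show "cyl_normal (p v) \<bullet> u v = 0" "cyl_normal (half_turn (p v)) \<bullet> u (s v) = 0"
      "cyl_normal q \<bullet> u w = 0" "cyl_normal (half_turn q) \<bullet> u w' = 0"
      using normal[of v] normal[of "s v"] normal[of w] normal[of w'] v_in sv_in p_sv by simp_all
    show "(p v - q) \<bullet> u v + (q - p v) \<bullet> u w = 0"
      "(p v - half_turn q) \<bullet> u v + (half_turn q - p v) \<bullet> u w' = 0"
      "(half_turn (p v) - q) \<bullet> u (s v) + (q - half_turn (p v)) \<bullet> u w = 0"
      "(half_turn (p v) - half_turn q) \<bullet> u (s v) + (half_turn q - half_turn (p v)) \<bullet> u w' = 0"
      "(q - half_turn q) \<bullet> u w + (half_turn q - q) \<bullet> u w' = 0"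
      using edge[of w v] edge[of w "s v"] edge[of w' v] edge[of w' "s v"] edge[of w w'] v_in sv_in p_sv
      by (simp_all add: add.commute)
  qed
  show ?thesis
    unfolding cyl_inf_motion_def
  proof (intro conjI ballI impI)
    fix i j assume "i \<in> V" "j \<in> V" "{i, j} \<in> E"
    show "(p i - p j) \<bullet> u i + (p j - p i) \<bullet> u j = 0"
    proof (cases "{i, j} = {v, s v}")
      case True
      then show ?thesis
        using removed by (auto simp: doubleton_eq_iff add.commute)
    next
      case False
      with \<open>{i, j} \<in> E\<close> have "{i, j} \<in> E_ext"
        by blast
      then show ?thesis
        using edge[of i j] \<open>i \<in> V\<close> \<open>j \<in> V\<close> by simp
    qed
  next
    show "cyl_normal (p i) \<bullet> u i = 0" if "i \<in> V" for i
      using normal[of i] that by simp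
  qed
qed

lemma extended_motion_vanishing:
  assumes "cyl_inf_motion V_ext E_ext p_ext u" and "\<forall>i\<in>V. u i = 0"
  shows "u w = 0" "u w' = 0"
proof -
  note edge = cyl_inf_motion_edge[OF assms(1)] and normal = cyl_inf_motion_normal[OF assms(1)]
  show "u w = 0"
    by (rule admissible_position_pins[OF q_admissible])
      (use normal[of w] edge[of w v] edge[of w "s v"] assms(2) v_in sv_in p_sv in simp_all)
  show "u w' = 0"
    by (rule admissible_position_pins_half_turn[OF q_admissible])
      (use normal[of w'] edge[of w' v] edge[of w' "s v"] assms(2) v_in sv_in p_sv in simp_all)
qed

lemma extended_inf_rigid: "cyl_inf_rigid V_ext E_ext p_ext"
  unfolding cyl_inf_rigid_def
proof (intro allI impI)
  fix u assume u: "cyl_inf_motion V_ext E_ext p_ext u"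
  obtain \<alpha> \<beta> where triv: "\<forall>i\<in>V. u i = trivial_motion \<alpha> \<beta> (p i)"
    using rigid extended_motion_restrict[OF u] unfolding cyl_inf_rigid_def by blast
  define u' where "u' i = u i - trivial_motion \<alpha> \<beta> (p_ext i)" for i
  have "cyl_inf_motion V_ext E_ext p_ext u'"
    unfolding u'_def by (rule cyl_inf_motion_diff_trivial[OF u])
  moreover have "\<forall>i\<in>V. u' i = 0"
    using triv by (simp add: u'_def)
  ultimately have "u' w = 0" "u' w' = 0"
    by (rule extended_motion_vanishing)+
  then have "\<forall>i\<in>V_ext. u i = trivial_motion \<alpha> \<beta> (p_ext i)"
    using triv by (auto simp: u'_def)
  then show "\<exists>a b. \<forall>i\<in>V_ext. u i = trivial_motion a b (p_ext i)"
    by blast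
qed

end


theorem lemma4p8:
  fixes V :: "'a set" and E :: "'a set set" and s :: "'a \<Rightarrow> 'a" and v w w' :: 'a
  assumes "C2_symmetric_graph V E s"
    and "v \<in> V" and "s v \<noteq> v" and "{v, s v} \<in> E"
    and "w \<notin> V" and "w' \<notin> V" and "w \<noteq> w'"
    and "half_turn_rigid V E s"
  shows "half_turn_rigid (V \<union> {w, w'})
           ((E - {{v, s v}}) \<union> {{w, v}, {w, s v}, {w', v}, {w', s v}, {w, w'}})
           (s(w := w', w' := w))"
proof -
  obtain p where "cyl_framework V E p" "\<forall>u\<in>V. half_turn (p u) = p (s u)" "cyl_inf_rigid V E p"
    using assms(8) unfolding half_turn_rigid_def by blast
  then interpret half_turn_K4_extension V E s v w w' p
    using assms by unfold_locales
  show ?thesis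
    unfolding half_turn_rigid_def using extended_framework extended_symmetric extended_inf_rigid by blast
qed

end
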